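(* Let $f:\mathbb{N}^k\to\mathbb{N}$ ($k\ge1$) be minimal. Then $f$ is bad.
   Context: $\mathbb{N}=\{0,1,2,\dots\}$. For $A\subseteq\mathbb{N}$, $\bar d(A)=\limsup_{n\to\infty}\frac{|A\cap[0,n)|}{n}$. $\mathscr{C}_{I_{\bar d=0}}$ is the set of all finitary functions $f:\mathbb{N}^k\to\mathbb{N}$ ($k\ge1$) such that $\bar d(f[A^k])=0$ whenever $\bar d(A)=0$. For $f:\mathbb{N}^k\to\mathbb{N}$, a permutation $\pi$ of $\{1,\dots,k\}$ and $\bar a=(a_1,\dots,a_\ell)\in\mathbb{N}^\ell$ with $0\le\ell<k$, the shadow $f_{\pi,\bar a}$ is the $(k-\ell)$-ary function $(y_1,\dots,y_{k-\ell})\mapsto f_\pi(a_1,\dots,a_\ell,y_1,\dots,y_{k-\ell})$, where $f_\pi(x_1,\dots,x_k)=f(x_{\pi(1)},\dots,x_{\pi(k)})$; it is proper if $\ell>0$. $f$ is minimal if $f\notin\mathscr{C}_{I_{\bar d=0}}$ and every proper shadow of $f$ lies in $\mathscr{C}_{I_{\bar d=0}}$. $f$ is bad if there exists a rational $\varepsilon>0$ such that for every $i\in\mathbb{N}$ there are $n,t\ge i$ and $A\subseteq[i,n)$ with $|A\cap[0,r)|\le\frac{r}{2^i}$ for all $r\in\mathbb{N}$ and $|f[A^k]\cap[0,t)|\ge\varepsilon t$. *)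

theory Defs
  imports "HOL-Analysis.Analysis" "HOL-Combinatorics.Permutations"
begin

text \<open>A k-ary function N^k -> N is represented by (k, f) with f :: nat list => nat,
  applied to lists of length k. Arguments are 0-indexed.\<close>

definition updens :: "nat set \<Rightarrow> ereal" where
  "updens A = limsup (\<lambda>n. ereal (real (card (A \<inter> {..<n})) / real n))"

definition img_pow :: "nat \<Rightarrow> (nat list \<Rightarrow> nat) \<Rightarrow> nat set \<Rightarrow> nat set" where
  "img_pow k f A = f ` {xs. length xs = k \<and> set xs \<subseteq> A}"

definition in_clone :: "nat \<Rightarrow> (nat list \<Rightarrow> nat) \<Rightarrow> bool" where
  "in_clone k f \<longleftrightarrow> 1 \<le> k \<and> (\<forall>A. updens A = 0 \<longrightarrow> updens (img_pow k f A) = 0)"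

definition permute_args :: "nat \<Rightarrow> (nat \<Rightarrow> nat) \<Rightarrow> (nat list \<Rightarrow> nat) \<Rightarrow> nat list \<Rightarrow> nat" where
  "permute_args k \<pi> f = (\<lambda>xs. f (map (\<lambda>i. xs ! \<pi> i) [0..<k]))"

definition shadow :: "nat \<Rightarrow> (nat list \<Rightarrow> nat) \<Rightarrow> (nat \<Rightarrow> nat) \<Rightarrow> nat list \<Rightarrow> nat list \<Rightarrow> nat" where
  "shadow k f \<pi> as = (\<lambda>ys. permute_args k \<pi> f (as @ ys))"

definition minimal_fn :: "nat \<Rightarrow> (nat list \<Rightarrow> nat) \<Rightarrow> bool" where
  "minimal_fn k f \<longleftrightarrow> \<not> in_clone k f \<and>
     (\<forall>\<pi> as. \<pi> permutes {..<k} \<and> 0 < length as \<and> length as < k \<longrightarrow>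
        in_clone (k - length as) (shadow k f \<pi> as))"

definition bad_fn :: "nat \<Rightarrow> (nat list \<Rightarrow> nat) \<Rightarrow> bool" where
  "bad_fn k f \<longleftrightarrow> (\<exists>\<epsilon>::rat. \<epsilon> > 0 \<and> (\<forall>i::nat. \<exists>n t A. n \<ge> i \<and> t \<ge> i \<and> A \<subseteq> {i..<n} \<and>
      (\<forall>r::nat. real (card (A \<inter> {..<r})) \<le> real r / 2 ^ i) \<and>
      real (card (img_pow k f A \<inter> {..<t})) \<ge> real_of_rat \<epsilon> * real t))"

end

theory Submission
  imports Defs
begin

text \<open>Since f is not in the clone, some A of upper density 0 has f[A^k] of positive upper
  density. Given i, drop from A its elements below some M \<ge> i, chosen so large that the rest
  has counting function at most r/2^i everywhere. The values lost are values of f on tuples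
  with some coordinate below M, i.e. values of the finitely many proper shadows f_{\<pi>,(a)}
  with a < M on A; these shadows lie in the clone by minimality, so the lost values have
  density 0 and the image of the tail still has positive upper density. A finite initial
  segment of the tail already produces all image values below a suitable t.\<close>

definition zero_density :: "nat set \<Rightarrow> bool" where
  "zero_density X \<longleftrightarrow>
     (\<forall>e>0. eventually (\<lambda>n. real (card (X \<inter> {..<n})) \<le> e * real n) sequentially)"

lemma zero_density_updens: "updens X = 0 \<longleftrightarrow> zero_density X"
proof
  assume X0: "updens X = 0"
  show "zero_density X"
    unfolding zero_density_def
  proof (intro allI impI)
    fix e :: real assume e: "e > 0"
    have "ereal e > limsup (\<lambda>n. ereal (real (card (X \<inter> {..<n})) / real n))"
      using X0 e unfolding updens_def by simp
    from Limsup_lessD[OF this]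
    have "eventually (\<lambda>n. real (card (X \<inter> {..<n})) / real n < e) sequentially" by simp
    with eventually_gt_at_top[of 0]
    show "eventually (\<lambda>n. real (card (X \<inter> {..<n})) \<le> e * real n) sequentially"
      by eventually_elim (simp add: divide_less_eq mult.commute)
  qed
next
  assume X: "zero_density X"
  let ?x = "\<lambda>n. ereal (real (card (X \<inter> {..<n})) / real n)"
  have "limsup ?x \<le> 0"
    unfolding Limsup_le_iff
  proof (intro allI impI)
    fix y :: ereal assume y: "y > 0"
    show "eventually (\<lambda>n. y > ?x n) sequentially"
    proof (cases y)
      case (real r)
      with y have "r / 2 > 0" by simp
      with X have "eventually (\<lambda>n. real (card (X \<inter> {..<n})) \<le> r / 2 * real n) sequentially"
        unfolding zero_density_def by blast
      with eventually_gt_at_top[of 0] show ?thesis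
      proof eventually_elim
        case (elim n)
        then have "real (card (X \<inter> {..<n})) / real n \<le> r / 2" by (simp add: divide_le_eq)
        with \<open>r / 2 > 0\<close> have "real (card (X \<inter> {..<n})) / real n < r" by linarith
        with real show ?case by simp
      qed
    qed (use y in auto)
  qed
  moreover have "0 \<le> limsup ?x" by (rule le_Limsup) auto
  ultimately show "updens X = 0" unfolding updens_def by simp
qed

lemma not_zero_density_frequently:
  assumes "\<not> zero_density X"
  obtains e :: real where "e > 0"
    and "frequently (\<lambda>t. real (card (X \<inter> {..<t})) > e * real t) sequentially"
proof -
  from assms obtain e :: real where "e > 0"
    and "\<not> eventually (\<lambda>t. real (card (X \<inter> {..<t})) \<le> e * real t) sequentially"
    unfolding zero_density_def by blast
  then show ?thesis using that by (simp add: frequently_def not_less)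
qed

lemma zero_density_subset: "zero_density Y \<Longrightarrow> X \<subseteq> Y \<Longrightarrow> zero_density X"
  unfolding zero_density_def
proof (intro allI impI)
  fix e :: real
  assume "\<forall>e>0. eventually (\<lambda>n. real (card (Y \<inter> {..<n})) \<le> e * real n) sequentially"
    and "X \<subseteq> Y" "e > 0"
  then have "eventually (\<lambda>n. real (card (Y \<inter> {..<n})) \<le> e * real n) sequentially" by simp
  then show "eventually (\<lambda>n. real (card (X \<inter> {..<n})) \<le> e * real n) sequentially"
  proof eventually_elim
    case (elim n)
    have "card (X \<inter> {..<n}) \<le> card (Y \<inter> {..<n})"
      by (rule card_mono) (use \<open>X \<subseteq> Y\<close> in auto)
    with elim show ?case by linarith
  qed
qed

lemma zero_density_Un: "zero_density X \<Longrightarrow> zero_density Y \<Longrightarrow> zero_density (X \<union> Y)"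
  unfolding zero_density_def
proof (intro allI impI)
  fix e :: real
  assume "\<forall>e>0. eventually (\<lambda>n. real (card (X \<inter> {..<n})) \<le> e * real n) sequentially"
    and "\<forall>e>0. eventually (\<lambda>n. real (card (Y \<inter> {..<n})) \<le> e * real n) sequentially"
    and "e > 0"
  then have "eventually (\<lambda>n. real (card (X \<inter> {..<n})) \<le> e / 2 * real n) sequentially"
    and "eventually (\<lambda>n. real (card (Y \<inter> {..<n})) \<le> e / 2 * real n) sequentially"
    using half_gt_zero[OF \<open>e > 0\<close>] by blast+
  then show "eventually (\<lambda>n. real (card ((X \<union> Y) \<inter> {..<n})) \<le> e * real n) sequentially"
  proof eventually_elim
    case (elim n)
    have "card ((X \<union> Y) \<inter> {..<n}) \<le> card (X \<inter> {..<n}) + card (Y \<inter> {..<n})"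
      by (metis Int_Un_distrib2 card_Un_le)
    with elim show ?case by linarith
  qed
qed

lemma zero_density_finite: "finite X \<Longrightarrow> zero_density X"
  unfolding zero_density_def
proof (intro allI impI)
  fix e :: real assume "finite X" "e > 0"
  have "eventually (\<lambda>n. real n \<ge> real (card X) / e) sequentially"
    by (rule eventually_sequentiallyI[of "nat \<lceil>real (card X) / e\<rceil>"]) linarith
  then show "eventually (\<lambda>n. real (card (X \<inter> {..<n})) \<le> e * real n) sequentially"
  proof eventually_elim
    case (elim n)
    have "card (X \<inter> {..<n}) \<le> card X" by (rule card_mono) (use \<open>finite X\<close> in auto)
    moreover have "real (card X) \<le> e * real n"
      using elim \<open>e > 0\<close> by (simp add: divide_le_eq mult.commute)
    ultimately show ?case by linarith
  qed
qed

lemma zero_density_UN: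
  "finite I \<Longrightarrow> (\<And>i. i \<in> I \<Longrightarrow> zero_density (S i)) \<Longrightarrow> zero_density (\<Union>i\<in>I. S i)"
  by (induction I rule: finite_induct) (auto intro: zero_density_Un zero_density_finite)

lemma frequently_dense_cover:
  assumes "zero_density E" and "X \<subseteq> Y \<union> E" and "e > 0"
    and "frequently (\<lambda>t. real (card (X \<inter> {..<t})) > e * real t) sequentially"
  shows "frequently (\<lambda>t. real (card (Y \<inter> {..<t})) > e / 2 * real t) sequentially"
proof -
  have "eventually (\<lambda>t. real (card (E \<inter> {..<t})) \<le> e / 2 * real t) sequentially"
    using assms(1) half_gt_zero[OF assms(3)] unfolding zero_density_def by blast
  with assms(4) have "frequently (\<lambda>t. real (card (X \<inter> {..<t})) > e * real t \<and>
      real (card (E \<inter> {..<t})) \<le> e / 2 * real t) sequentially"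
    by (rule frequently_eventually_frequently)
  then show ?thesis
  proof (rule frequently_elim1, elim conjE)
    fix t
    assume X: "real (card (X \<inter> {..<t})) > e * real t"
      and E: "real (card (E \<inter> {..<t})) \<le> e / 2 * real t"
    have "card (X \<inter> {..<t}) \<le> card ((Y \<inter> {..<t}) \<union> (E \<inter> {..<t}))"
      by (rule card_mono) (use assms(2) in auto)
    also have "\<dots> \<le> card (Y \<inter> {..<t}) + card (E \<inter> {..<t})" by (rule card_Un_le)
    finally show "real (card (Y \<inter> {..<t})) > e / 2 * real t" using X E by linarith
  qed
qed

lemma zero_density_tail_sparse:
  assumes "zero_density A" and "d > 0"
  shows "eventually (\<lambda>M. \<forall>r. real (card ((A - {..<M}) \<inter> {..<r})) \<le> d * real r) sequentially"
proof -
  obtain N where N: "\<And>r. r \<ge> N \<Longrightarrow> real (card (A \<inter> {..<r})) \<le> d * real r"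
    using assms unfolding zero_density_def eventually_sequentially by blast
  show ?thesis
  proof (rule eventually_sequentiallyI[of N], intro allI)
    fix M r assume "N \<le> M"
    show "real (card ((A - {..<M}) \<inter> {..<r})) \<le> d * real r"
    proof (cases "r \<le> M")
      case True
      then have "(A - {..<M}) \<inter> {..<r} = {}" by auto
      with \<open>d > 0\<close> show ?thesis by simp
    next
      case False
      have "card ((A - {..<M}) \<inter> {..<r}) \<le> card (A \<inter> {..<r})" by (rule card_mono) auto
      with N[of r] False \<open>N \<le> M\<close> show ?thesis by simp
    qed
  qed
qed

lemma img_pow_mono: "X \<subseteq> Y \<Longrightarrow> img_pow k f X \<subseteq> img_pow k f Y"
  unfolding img_pow_def by auto

lemma finite_subset_img_pow_initial_segment:
  assumes "finite T" "T \<subseteq> img_pow k f B"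
  shows "\<exists>n. T \<subseteq> img_pow k f (B \<inter> {..<n})"
  using assms
proof (induction T rule: finite_induct)
  case empty
  then show ?case by auto
next
  case (insert y T)
  then obtain n where n: "T \<subseteq> img_pow k f (B \<inter> {..<n})" by auto
  from insert obtain xs where xs: "length xs = k" "set xs \<subseteq> B" "y = f xs"
    unfolding img_pow_def by auto
  obtain m where m: "set xs \<subseteq> {..<m}" using finite_nat_bounded[of "set xs"] by auto
  have "img_pow k f (B \<inter> {..<n}) \<subseteq> img_pow k f (B \<inter> {..<max n m})"
    by (rule img_pow_mono) auto
  with n have "T \<subseteq> img_pow k f (B \<inter> {..<max n m})" by blast
  moreover have "y \<in> img_pow k f (B \<inter> {..<max n m})"
    using xs m unfolding img_pow_def by (intro image_eqI[of y f xs]) auto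
  ultimately show ?case by blast
qed

lemma eventually_img_pow_initial_segment:
  "eventually (\<lambda>n. img_pow k f B \<inter> {..<t} \<subseteq> img_pow k f (B \<inter> {..<n})) sequentially"
proof -
  obtain n0 where n0: "img_pow k f B \<inter> {..<t} \<subseteq> img_pow k f (B \<inter> {..<n0})"
    using finite_subset_img_pow_initial_segment[of "img_pow k f B \<inter> {..<t}" k f B] by auto
  show ?thesis
  proof (rule eventually_sequentiallyI[of n0])
    fix n assume "n0 \<le> n"
    then have "img_pow k f (B \<inter> {..<n0}) \<subseteq> img_pow k f (B \<inter> {..<n})"
      by (intro img_pow_mono) auto
    with n0 show "img_pow k f B \<inter> {..<t} \<subseteq> img_pow k f (B \<inter> {..<n})" by blast
  qed
qed

lemma initial_segment_witness:
  assumes "B \<inter> {..<i} = {}" and "\<forall>r. real (card (B \<inter> {..<r})) \<le> b r"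
    and "c \<le> real (card (img_pow k f B \<inter> {..<t}))"
  shows "\<exists>n\<ge>i. B \<inter> {..<n} \<subseteq> {i..<n} \<and>
    (\<forall>r. real (card (B \<inter> {..<n} \<inter> {..<r})) \<le> b r) \<and>
    c \<le> real (card (img_pow k f (B \<inter> {..<n}) \<inter> {..<t}))"
proof -
  obtain n where "n \<ge> i" and n: "img_pow k f B \<inter> {..<t} \<subseteq> img_pow k f (B \<inter> {..<n})"
    using eventually_conj[OF eventually_ge_at_top[of i] eventually_img_pow_initial_segment[of k f B t]]
    by (auto simp: eventually_sequentially)
  have "B \<inter> {..<n} \<subseteq> {i..<n}" using assms(1) by auto
  moreover have "\<forall>r. real (card (B \<inter> {..<n} \<inter> {..<r})) \<le> b r"
  proof
    fix r
    have "card (B \<inter> {..<n} \<inter> {..<r}) \<le> card (B \<inter> {..<r})" by (rule card_mono) auto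
    with assms(2) show "real (card (B \<inter> {..<n} \<inter> {..<r})) \<le> b r"
      by (meson of_nat_le_iff order.trans)
  qed
  moreover have "card (img_pow k f B \<inter> {..<t}) \<le> card (img_pow k f (B \<inter> {..<n}) \<inter> {..<t})"
    using n by (intro card_mono) auto
  ultimately show ?thesis using assms(3) \<open>n \<ge> i\<close> by fastforce
qed

lemma value_as_shadow_value:
  assumes "length xs = k" and "j < k"
  shows "\<exists>ys. length ys = k - 1 \<and> set ys \<subseteq> set xs \<and>
    f xs = shadow k f (Transposition.transpose 0 j) [xs ! j] ys"
proof -
  let ?p = "Transposition.transpose 0 j"
  define zs where "zs = map (\<lambda>l. xs ! ?p l) [0..<k]"
  have p_less: "\<And>l. l < k \<Longrightarrow> ?p l < k" using assms by (auto simp: Transposition.transpose_def)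
  have zs_cons: "zs = [xs ! j] @ tl zs"
  proof -
    have "zs \<noteq> []" "hd zs = xs ! j" using assms by (auto simp: zs_def hd_map upt_rec)
    then show ?thesis by (cases zs) auto
  qed
  have "map (\<lambda>l. zs ! ?p l) [0..<k] = map (\<lambda>l. xs ! l) [0..<k]"
    using p_less by (auto simp: zs_def)
  also have "\<dots> = xs" using assms(1) by (metis map_nth)
  finally have "f xs = shadow k f ?p [xs ! j] (tl zs)"
    unfolding shadow_def permute_args_def using zs_cons by metis
  moreover have "set (tl zs) \<subseteq> set xs"
  proof -
    have "set zs \<subseteq> set xs" using p_less assms by (auto simp: zs_def)
    then show ?thesis by (cases zs) auto
  qed
  ultimately show ?thesis by (intro exI[of _ "tl zs"]) (simp add: zs_def)
qed

lemma img_small_coordinate_subset_shadows: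
  "f ` {xs. length xs = k \<and> set xs \<subseteq> A \<and> (\<exists>j<k. xs ! j < M)}
     \<subseteq> (\<Union>(j, a)\<in>{..<k} \<times> {..<M}. img_pow (k - 1) (shadow k f (Transposition.transpose 0 j) [a]) A)"
proof
  fix y assume "y \<in> f ` {xs. length xs = k \<and> set xs \<subseteq> A \<and> (\<exists>j<k. xs ! j < M)}"
  then obtain xs j where xs: "length xs = k" "set xs \<subseteq> A" "j < k" "xs ! j < M" "y = f xs"
    by auto
  with value_as_shadow_value[of xs k j f] obtain ys where
    "length ys = k - 1" "set ys \<subseteq> A" "y = shadow k f (Transposition.transpose 0 j) [xs ! j] ys"
    by auto
  with xs show "y \<in> (\<Union>(j, a)\<in>{..<k} \<times> {..<M}.
      img_pow (k - 1) (shadow k f (Transposition.transpose 0 j) [a]) A)"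
    unfolding img_pow_def by blast
qed

lemma zero_density_img_small_coordinate:
  assumes "1 \<le> k" and "minimal_fn k f" and "zero_density A"
  shows "zero_density (f ` {xs. length xs = k \<and> set xs \<subseteq> A \<and> (\<exists>j<k. xs ! j < M)})"
proof (rule zero_density_subset[OF zero_density_UN img_small_coordinate_subset_shadows])
  fix ja assume "ja \<in> {..<k} \<times> {..<M}"
  then obtain j a where ja: "ja = (j, a)" "j < k" by auto
  let ?g = "shadow k f (Transposition.transpose 0 j) [a]"
  show "zero_density (case ja of (j, a) \<Rightarrow> img_pow (k - 1) (shadow k f (Transposition.transpose 0 j) [a]) A)"
  proof (cases "k = 1")
    case True
    then have "img_pow (k - 1) ?g A = {?g []}" by (auto simp: img_pow_def)
    then show ?thesis using ja zero_density_finite by simp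
  next
    case False
    have "Transposition.transpose 0 j permutes {..<k}"
      using ja assms(1) by (intro permutes_swap_id) auto
    moreover have "0 < length [a]" "length [a] < k" using False assms(1) by auto
    ultimately have "in_clone (k - length [a]) ?g"
      using assms(2) unfolding minimal_fn_def by blast
    with assms(3) ja show ?thesis by (simp add: in_clone_def zero_density_updens)
  qed
qed simp

lemma frequently_dense_img_tail:
  assumes "1 \<le> k" and "minimal_fn k f" and "zero_density A" and "e > 0"
    and "frequently (\<lambda>t. real (card (img_pow k f A \<inter> {..<t})) > e * real t) sequentially"
  shows "frequently (\<lambda>t. real (card (img_pow k f (A - {..<M}) \<inter> {..<t})) > e / 2 * real t)
    sequentially"
proof (rule frequently_dense_cover[OF zero_density_img_small_coordinate[OF assms(1-3)] _ assms(4,5)])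
  show "img_pow k f A \<subseteq> img_pow k f (A - {..<M}) \<union>
      f ` {xs. length xs = k \<and> set xs \<subseteq> A \<and> (\<exists>j<k. xs ! j < M)}"
  proof
    fix y assume "y \<in> img_pow k f A"
    then obtain xs where xs: "length xs = k" "set xs \<subseteq> A" "y = f xs"
      unfolding img_pow_def by auto
    show "y \<in> img_pow k f (A - {..<M}) \<union>
        f ` {xs. length xs = k \<and> set xs \<subseteq> A \<and> (\<exists>j<k. xs ! j < M)}"
    proof (cases "\<exists>j<k. xs ! j < M")
      case True
      with xs show ?thesis by auto
    next
      case False
      with xs have "set xs \<subseteq> A - {..<M}" by (auto simp: in_set_conv_nth)
      with xs show ?thesis unfolding img_pow_def by auto
    qed
  qed
qed

theorem mainTheorem5:
  fixes k :: nat and f :: "nat list \<Rightarrow> nat"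
  assumes "1 \<le> k" and "minimal_fn k f"
  shows "bad_fn k f"
proof -
  obtain A where A: "zero_density A" and dense_img: "\<not> zero_density (img_pow k f A)"
    using assms unfolding minimal_fn_def in_clone_def zero_density_updens by auto
  from dense_img obtain e :: real where "e > 0"
    and dense: "frequently (\<lambda>t. real (card (img_pow k f A \<inter> {..<t})) > e * real t) sequentially"
    by (rule not_zero_density_frequently)
  obtain q :: rat where q: "0 < real_of_rat q" "real_of_rat q < e / 2"
    using of_rat_dense[of 0 "e / 2"] \<open>e > 0\<close> by auto
  show ?thesis
    unfolding bad_fn_def
  proof (intro exI[of _ q] conjI allI)
    show "q > 0" using q(1) by simp
    fix i :: nat
    obtain M where "M \<ge> i"
      and sparse: "\<forall>r. real (card ((A - {..<M}) \<inter> {..<r})) \<le> real r / 2 ^ i"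
      using eventually_conj[OF eventually_ge_at_top[of i] zero_density_tail_sparse[OF A, of "1 / 2 ^ i"]]
      by (auto simp: eventually_sequentially)
    obtain t where "t \<ge> i"
      and t: "real (card (img_pow k f (A - {..<M}) \<inter> {..<t})) > e / 2 * real t"
      using frequently_ex[OF frequently_eventually_frequently[OF
            frequently_dense_img_tail[OF assms A \<open>e > 0\<close> dense, of M] eventually_ge_at_top[of i]]]
      by blast
    have tail: "(A - {..<M}) \<inter> {..<i} = {}" using \<open>M \<ge> i\<close> by auto
    have "real_of_rat q * real t \<le> real (card (img_pow k f (A - {..<M}) \<inter> {..<t}))"
      using t q(2) mult_right_mono[of "real_of_rat q" "e / 2" "real t"] by linarith
    from initial_segment_witness[OF tail sparse this]
    show "\<exists>n t A. n \<ge> i \<and> t \<ge> i \<and> A \<subseteq> {i..<n} \<and>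
        (\<forall>r::nat. real (card (A \<inter> {..<r})) \<le> real r / 2 ^ i) \<and>
        real (card (img_pow k f A \<inter> {..<t})) \<ge> real_of_rat q * real t"
      using \<open>t \<ge> i\<close> by blast
  qed
qed

end
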